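(* Assume (P.1), (P.4) and (P.7) hold. Let $\Omega\in\mathscr A$ be $1$-admissible with $\mathfrak m(\Omega)\in(0,+\infty)$. A function $u\in BV_0(\Omega,\mathfrak m)$ with $\|u\|_1>0$ satisfies $\mathrm{Var}(u)/\|u\|_1=\lambda_{1,1}(\Omega)$ if and only if every set $F^t$ ($t\in\mathbb R$) with $\mathfrak m(F^t)>0$ is a $1$-Cheeger set of $\Omega$, where $F^t:=\{u>t\}$ for $t\ge0$ and $F^t:=\{u<t\}$ for $t<0$. Moreover, the minimizer of the problem defining $\lambda_{1,1}(\Omega)$ exists and is unique up to multiplication by a nonzero constant if and only if $\Omega$ has a unique (up to $\mathfrak m$-negligible sets) $1$-Cheeger set.
   Context: $(X,\mathscr A,\mathfrak m)$ is a non-negative $\sigma$-finite measure space; "$A\subset B$" means $\mathfrak m(A\setminus B)=0$. $P\colon\mathscr A\to[0,+\infty]$ is a proper functional. (P.1): $P(\emptyset)=0$. (P.4): if $\chi_{E_k}\to\chi_E$ in $L^1(X,\mathfrak m)$ then $P(E)\le\liminf_k P(E_k)$. (P.7): $P(E)=P(X\setminus E)$ for all $E\in\mathscr A$. $\Omega$ is $1$-admissible if it contains some $E$ with $0<\mathfrak m(E)<+\infty$, $P(E)<+\infty$; $h_1(\Omega)=\inf\{P(E)/\mathfrak m(E): E\subset\Omega,\ 0<\mathfrak m(E)<+\infty,\ P(E)<+\infty\}$; minimizers are $1$-Cheeger sets. $\mathrm{Var}(u):=\int_{\mathbb R}P(\{u>t\})\,dt$ if $t\mapsto P(\{u>t\})$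 is $\mathscr L^1$-measurable, $+\infty$ otherwise; $BV(X,\mathfrak m)=\{u\in L^1:\mathrm{Var}(u)<\infty\}$; $BV_0(\Omega,\mathfrak m)=\{u\in BV(X,\mathfrak m):\int_{X\setminus\Omega}|u|\,d\mathfrak m=0\}$; $\lambda_{1,1}(\Omega)=\inf\{\mathrm{Var}(u)/\|u\|_1: u\in BV_0(\Omega,\mathfrak m),\ \|u\|_1>0\}$. *)

theory Defs
  imports "HOL-Analysis.Analysis"
begin

definition msub :: "'a measure \<Rightarrow> 'a set \<Rightarrow> 'a set \<Rightarrow> bool" where
  "msub M A B \<longleftrightarrow> emeasure M (A - B) = 0"

definition cheeger_competitor :: "'a measure \<Rightarrow> ('a set \<Rightarrow> ennreal) \<Rightarrow> 'a set \<Rightarrow> 'a set \<Rightarrow> bool" where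
  "cheeger_competitor M P \<Omega> E \<longleftrightarrow>
     E \<in> sets M \<and> msub M E \<Omega> \<and> 0 < emeasure M E \<and> emeasure M E < \<infinity> \<and> P E < \<infinity>"

definition admissible1 :: "'a measure \<Rightarrow> ('a set \<Rightarrow> ennreal) \<Rightarrow> 'a set \<Rightarrow> bool" where
  "admissible1 M P \<Omega> \<longleftrightarrow> (\<exists>E. cheeger_competitor M P \<Omega> E)"

definition h1 :: "'a measure \<Rightarrow> ('a set \<Rightarrow> ennreal) \<Rightarrow> 'a set \<Rightarrow> ennreal" where
  "h1 M P \<Omega> = Inf {P E / emeasure M E | E. cheeger_competitor M P \<Omega> E}"

definition cheeger1 :: "'a measure \<Rightarrow> ('a set \<Rightarrow> ennreal) \<Rightarrow> 'a set \<Rightarrow> 'a set \<Rightarrow> bool" where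
  "cheeger1 M P \<Omega> E \<longleftrightarrow> cheeger_competitor M P \<Omega> E \<and> P E / emeasure M E = h1 M P \<Omega>"

text \<open>Total variation via the coarea-type formula.\<close>
definition Var :: "'a measure \<Rightarrow> ('a set \<Rightarrow> ennreal) \<Rightarrow> ('a \<Rightarrow> real) \<Rightarrow> ennreal" where
  "Var M P u =
     (if (\<lambda>t. P {x \<in> space M. t < u x}) \<in> borel_measurable lebesgue
      then (\<integral>\<^sup>+ t. P {x \<in> space M. t < u x} \<partial>lebesgue) else \<infinity>)"

definition norm1 :: "'a measure \<Rightarrow> ('a \<Rightarrow> real) \<Rightarrow> real" where
  "norm1 M u = (\<integral> x. \<bar>u x\<bar> \<partial>M)"

definition BV :: "'a measure \<Rightarrow> ('a set \<Rightarrow> ennreal) \<Rightarrow> ('a \<Rightarrow> real) \<Rightarrow> bool" where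
  "BV M P u \<longleftrightarrow> integrable M u \<and> Var M P u < \<infinity>"

definition BV0 :: "'a measure \<Rightarrow> ('a set \<Rightarrow> ennreal) \<Rightarrow> 'a set \<Rightarrow> ('a \<Rightarrow> real) \<Rightarrow> bool" where
  "BV0 M P \<Omega> u \<longleftrightarrow> BV M P u \<and>
     (\<integral>\<^sup>+ x. ennreal \<bar>u x\<bar> * indicator (space M - \<Omega>) x \<partial>M) = 0"

definition lambda11 :: "'a measure \<Rightarrow> ('a set \<Rightarrow> ennreal) \<Rightarrow> 'a set \<Rightarrow> ennreal" where
  "lambda11 M P \<Omega> =
     Inf {Var M P u / ennreal (norm1 M u) | u. BV0 M P \<Omega> u \<and> norm1 M u > 0}"

definition lambda11_minimizer :: "'a measure \<Rightarrow> ('a set \<Rightarrow> ennreal) \<Rightarrow> 'a set \<Rightarrow> ('a \<Rightarrow> real) \<Rightarrow> bool" where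
  "lambda11_minimizer M P \<Omega> u \<longleftrightarrow>
     BV0 M P \<Omega> u \<and> norm1 M u > 0 \<and> Var M P u / ennreal (norm1 M u) = lambda11 M P \<Omega>"

definition Fset :: "'a measure \<Rightarrow> ('a \<Rightarrow> real) \<Rightarrow> real \<Rightarrow> 'a set" where
  "Fset M u t = (if 0 \<le> t then {x \<in> space M. t < u x} else {x \<in> space M. u x < t})"

end

theory Submission
  imports Defs
begin

text \<open>
  For \<open>t \<in> \<real>\<close> let \<open>L\<^sup>t\<close> be the set of points at which \<open>u\<close> lies beyond \<open>t\<close> as seen from \<open>0\<close>,
  i.e. \<open>L\<^sup>t = {u > t}\<close> for \<open>t \<ge> 0\<close> and \<open>L\<^sup>t = {u \<le> t}\<close> for \<open>t < 0\<close>. The measures of the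
  \<open>L\<^sup>t\<close> integrate to \<open>\<parallel>u\<parallel>\<^sub>1\<close> (layer cake), while \<open>P(L\<^sup>t) = P{u > t}\<close> by (P.7) and
  \<open>P(L\<^sup>t) \<ge> h\<^sub>1(\<Omega>) m(L\<^sup>t)\<close> since \<open>L\<^sup>t\<close> lies in \<open>\<Omega>\<close>. Integrating in \<open>t\<close> gives
  \<open>Var u \<ge> h\<^sub>1(\<Omega>) \<parallel>u\<parallel>\<^sub>1\<close>, with equality for indicators of Cheeger sets, so
  \<open>\<lambda>\<^sub>1\<^sub>,\<^sub>1(\<Omega>) = h\<^sub>1(\<Omega>)\<close> and \<open>u\<close> is a minimizer iff \<open>P(L\<^sup>t) = h\<^sub>1(\<Omega>) m(L\<^sup>t)\<close> for almost
  every \<open>t\<close>. As \<open>s \<rightarrow> t\<close> suitably, \<open>L\<^sup>s\<close> tends to \<open>F\<^sup>t\<close> in measure and \<open>F\<^sup>s\<close> tends to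
  \<open>L\<^sup>t\<close>; lower semicontinuity (P.4) transfers the inequality \<open>P \<le> h\<^sub>1(\<Omega>) m\<close> along these
  limits, which gives both directions of the characterization.

  Indicators of Cheeger sets are minimizers, and a function is determined almost everywhere by
  which rational level sets \<open>F\<^sup>q\<close> contain each point. So if \<open>E\<close> is the only Cheeger set, every
  non-null level set of a minimizer is \<open>E\<close> up to a null set and the minimizer is a multiple of
  the indicator of \<open>E\<close>; conversely, if minimizers are unique up to scaling, the indicators of
  any two Cheeger sets are proportional.
\<close>

lemma ennreal_divide_eq_iff:
  fixes a b c :: ennreal
  assumes "0 < b" "b < \<infinity>"
  shows "a / b = c \<longleftrightarrow> a = c * b"
  using assms ennreal_divide_times mult_divide_eq_ennreal by fastforce

lemma ennreal_le_divide_iff: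
  fixes a b c :: ennreal
  assumes "0 < b" "b < \<infinity>"
  shows "c \<le> a / b \<longleftrightarrow> c * b \<le> a"
  by (metis assms divide_less_ennreal infinity_ennreal_def linorder_not_less not_gr_zero)

lemma AE_lborel_exists_between:
  assumes "AE t in lborel. Q t" "(a::real) < b"
  obtains t where "a < t" "t < b" "Q t"
proof -
  have "\<not> (AE t in lborel. t \<notin> {a<..<b})"
    using assms(2) by (subst AE_iff_measurable[of "{a<..<b}"]) auto
  moreover have "AE t in lborel. t \<notin> {a<..<b}" if "\<And>t. a < t \<Longrightarrow> t < b \<Longrightarrow> \<not> Q t"
    using assms(1) by (rule eventually_mono) (use that in auto)
  ultimately show ?thesis
    using that by blast
qed

lemma null_differences_iff_AE_mem_iff:
  assumes "A \<in> sets M" "B \<in> sets M"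
  shows "emeasure M (A - B) = 0 \<and> emeasure M (B - A) = 0 \<longleftrightarrow> (AE x in M. x \<in> A \<longleftrightarrow> x \<in> B)"
proof -
  have "(AE x in M. x \<in> A \<longleftrightarrow> x \<in> B) \<longleftrightarrow> (AE x in M. x \<notin> A - B) \<and> (AE x in M. x \<notin> B - A)"
    unfolding AE_conj_iff[symmetric] by (rule arg_cong[where f = "almost_everywhere M"]) auto
  also have "\<dots> \<longleftrightarrow> A - B \<in> null_sets M \<and> B - A \<in> null_sets M"
    using assms by (simp only: AE_iff_null_sets sets.Diff)
  finally show ?thesis
    using assms by auto
qed

lemma nn_integral_abs_indicator_diff:
  assumes "A \<in> sets M" "B \<in> sets M"
  shows "(\<integral>\<^sup>+ x. ennreal \<bar>indicator A x - indicator B x\<bar> \<partial>M) = emeasure M ((A - B) \<union> (B - A))"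
proof -
  have "\<And>x. ennreal \<bar>indicator A x - indicator B x\<bar> = indicator ((A - B) \<union> (B - A)) x"
    by (auto simp: indicator_def)
  then show ?thesis using assms by simp
qed

lemma AE_eq_if_le_and_nn_integral_eq:
  assumes [measurable]: "f \<in> borel_measurable N" "g \<in> borel_measurable N"
    and le: "\<And>t. g t \<le> f t" and eq: "integral\<^sup>N N f = integral\<^sup>N N g" and fin: "integral\<^sup>N N g \<noteq> \<infinity>"
  shows "AE t in N. f t = g t"
proof -
  have "(\<integral>\<^sup>+t. f t - g t \<partial>N) = 0"
    using nn_integral_diff[of f N g] le eq fin by (simp add: diff_eq_0_iff_ennreal top.not_eq_extremum)
  then have "AE t in N. f t - g t = 0"
    by (simp add: nn_integral_0_iff_AE)
  then show ?thesis
    by (rule eventually_mono) (use le in \<open>auto simp: diff_eq_0_iff_ennreal intro: antisym\<close>)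
qed

section \<open>Layer sets and the layer cake formula\<close>

text \<open>\<open>layer_set M u t\<close> is \<open>L\<^sup>t\<close>; for \<open>t < 0\<close> it is the complement of \<open>{u > t}\<close>.\<close>
definition layer_set :: "'a measure \<Rightarrow> ('a \<Rightarrow> real) \<Rightarrow> real \<Rightarrow> 'a set" where
  "layer_set M u t = {x \<in> space M. (0 \<le> t \<and> t < u x) \<or> (t < 0 \<and> u x \<le> t)}"

lemma sets_layer_set[measurable]:
  assumes [measurable]: "u \<in> borel_measurable M"
  shows "layer_set M u t \<in> sets M"
  unfolding layer_set_def by measurable

lemma sets_Fset[measurable]:
  assumes [measurable]: "u \<in> borel_measurable M"
  shows "Fset M u t \<in> sets M"
  unfolding Fset_def by (cases "0 \<le> t") (simp_all, measurable)

lemma nn_integral_emeasure_layer_set: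
  assumes "sigma_finite_measure M" and [measurable]: "u \<in> borel_measurable M"
  shows "(\<integral>\<^sup>+t. emeasure M (layer_set M u t) \<partial>lborel) = (\<integral>\<^sup>+x. ennreal \<bar>u x\<bar> \<partial>M)"
proof -
  interpret M: sigma_finite_measure M by fact
  interpret pair_sigma_finite lborel M ..
  define S where "S = {p \<in> space (lborel \<Otimes>\<^sub>M M). snd p \<in> layer_set M u (fst p)}"
  have S: "S \<in> sets (lborel \<Otimes>\<^sub>M M)"
    unfolding S_def layer_set_def by measurable
  have "(\<integral>\<^sup>+t. emeasure M (layer_set M u t) \<partial>lborel) = (\<integral>\<^sup>+t. emeasure M (Pair t -` S) \<partial>lborel)"
    by (auto simp: S_def space_pair_measure layer_set_def
        intro!: nn_integral_cong arg_cong[where f = "emeasure M"])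
  also have "\<dots> = emeasure (lborel \<Otimes>\<^sub>M M) S"
    by (rule M.emeasure_pair_measure_alt[OF S, symmetric])
  also have "\<dots> = (\<integral>\<^sup>+x. emeasure lborel ((\<lambda>t. (t, x)) -` S) \<partial>M)"
    by (rule emeasure_pair_measure_alt2[OF S])
  also have "\<dots> = (\<integral>\<^sup>+x. ennreal \<bar>u x\<bar> \<partial>M)"
  proof (rule nn_integral_cong)
    fix x assume "x \<in> space M"
    then have "(\<lambda>t. (t, x)) -` S = (if 0 \<le> u x then {0..<u x} else {u x..<0})"
      by (auto simp: S_def space_pair_measure layer_set_def)
    then show "emeasure lborel ((\<lambda>t. (t, x)) -` S) = ennreal \<bar>u x\<bar>"
      by simp
  qed
  finally show ?thesis .
qed

lemma borel_measurable_emeasure_layer_set: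
  assumes "sigma_finite_measure M" and [measurable]: "u \<in> borel_measurable M"
  shows "(\<lambda>t. emeasure M (layer_set M u t)) \<in> borel_measurable lborel"
proof -
  interpret sigma_finite_measure M by fact
  show ?thesis
    unfolding layer_set_def by measurable
qed

lemma Fset_subset_support: "Fset M u t \<subseteq> {x \<in> space M. u x \<noteq> 0}"
  by (auto simp: Fset_def)

lemma layer_set_subset_support: "layer_set M u t \<subseteq> {x \<in> space M. u x \<noteq> 0}"
  by (auto simp: layer_set_def)

section \<open>Functions determined by their rational level sets\<close>

lemma mem_Fset_iff:
  "x \<in> space M \<Longrightarrow> x \<in> Fset M u t \<longleftrightarrow> (if 0 \<le> t then t < u x else u x < t)"
  by (simp add: Fset_def)

text \<open>\<open>if 0 \<le> q then q < a else a < q\<close> says that a point where the function takes the value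
  \<open>a\<close> lies in \<open>F\<^sup>q\<close>.\<close>
lemma real_eq_if_same_rational_levels:
  fixes a b :: real
  assumes "\<And>q::rat. (if 0 \<le> q then of_rat q < a else a < of_rat q) \<longleftrightarrow>
                    (if 0 \<le> q then of_rat q < b else b < of_rat q)"
  shows "a = b"
proof (rule ccontr)
  assume "a \<noteq> b"
  then have "min a b < max a b"
    by (simp add: min_def max_def)
  then obtain r where "r \<in> \<rat>" and r: "min a b < r" "r < max a b"
    using Rats_dense_in_real by blast
  then obtain q where q: "r = of_rat q"
    by (auto elim: Rats_cases)
  have "r < a \<longleftrightarrow> \<not> r < b" "a < r \<longleftrightarrow> \<not> b < r"
    using r by linarith+
  then show False
    using assms[of q] q by (cases "0 \<le> q") simp_all
qed

lemma eq_if_same_rational_Fset: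
  assumes "x \<in> space M" "y \<in> space M"
    and "\<And>q::rat. x \<in> Fset M u (of_rat q) \<longleftrightarrow> y \<in> Fset M u (of_rat q)"
  shows "u x = u y"
proof (rule real_eq_if_same_rational_levels)
  fix q :: rat
  show "(if 0 \<le> q then of_rat q < u x else u x < of_rat q) \<longleftrightarrow>
        (if 0 \<le> q then of_rat q < u y else u y < of_rat q)"
    using assms(3)[of q] assms(1,2) by (simp add: mem_Fset_iff)
qed

lemma eq_0_if_in_no_rational_Fset:
  assumes "x \<in> space M" "\<And>q::rat. x \<notin> Fset M u (of_rat q)"
  shows "u x = 0"
proof (rule real_eq_if_same_rational_levels)
  fix q :: rat
  show "(if 0 \<le> q then of_rat q < u x else u x < of_rat q) \<longleftrightarrow>
        (if 0 \<le> q then of_rat q < (0::real) else 0 < (of_rat q :: real))"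
    using assms(2)[of q] assms(1) by (simp add: mem_Fset_iff)
qed

lemma norm1_eq_0_if_AE_eq_0: "AE x in M. u x = 0 \<Longrightarrow> norm1 M u = 0"
  unfolding norm1_def by (rule integral_eq_zero_AE) (auto elim: eventually_mono)

lemma AE_eq_zero_if_Fset_null:
  assumes [measurable]: "u \<in> borel_measurable M"
    and null: "\<And>t. emeasure M (Fset M u t) = 0"
  shows "AE x in M. u x = 0"
proof -
  have "AE x in M. x \<notin> Fset M u t" for t
    using null[of t] by (intro AE_not_in null_setsI) simp_all
  then have "AE x in M. \<forall>q::rat. x \<notin> Fset M u (of_rat q)"
    by (simp add: AE_all_countable)
  with AE_space show ?thesis
    by eventually_elim (rule eq_0_if_in_no_rational_Fset, auto)
qed

lemma AE_eq_mult_indicator_if_Fset_null_or_AE_eq: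
  assumes [measurable]: "u \<in> borel_measurable M" "E \<in> sets M" and "0 < emeasure M E"
    and levels: "\<And>t. emeasure M (Fset M u t) = 0 \<or> (AE x in M. x \<in> Fset M u t \<longleftrightarrow> x \<in> E)"
  shows "\<exists>c. AE x in M. u x = c * indicator E x"
proof -
  have "AE x in M. x \<in> Fset M u t \<longleftrightarrow> x \<in> E \<and> 0 < emeasure M (Fset M u t)" for t
  proof (cases "emeasure M (Fset M u t) = 0")
    case True
    then show ?thesis
      using AE_iff_null_sets[of "Fset M u t" M] by (auto simp: null_sets_def elim: eventually_mono)
  next
    case False
    then show ?thesis
      using levels[of t] by (auto simp: zero_less_iff_neq_zero elim: eventually_mono)
  qed
  then have good: "AE x in M. x \<in> space M \<and>
      (\<forall>q::rat. x \<in> Fset M u (of_rat q) \<longleftrightarrow> x \<in> E \<and> 0 < emeasure M (Fset M u (of_rat q)))"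
    unfolding AE_all_countable AE_conj_iff using AE_space by blast
  have E_not_null: "\<not> (AE x in M. x \<notin> E)"
    using assms(2,3) by (simp add: AE_iff_null_sets[symmetric] null_sets_def)
  obtain x\<^sub>0 where x\<^sub>0: "x\<^sub>0 \<in> E" "x\<^sub>0 \<in> space M"
    "\<And>q::rat. x\<^sub>0 \<in> Fset M u (of_rat q) \<longleftrightarrow> 0 < emeasure M (Fset M u (of_rat q))"
  proof (rule ccontr)
    assume "\<not> thesis"
    from good have "AE x in M. x \<notin> E"
      by eventually_elim (use that \<open>\<not> thesis\<close> in auto)
    with E_not_null show False ..
  qed
  from good have "AE x in M. u x = u x\<^sub>0 * indicator E x"
  proof eventually_elim
    case (elim x)
    then show ?case
      using x\<^sub>0 eq_if_same_rational_Fset[of x M x\<^sub>0 u] eq_0_if_in_no_rational_Fset[of x M u]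
      by (cases "x \<in> E") auto
  qed
  then show ?thesis ..
qed

section \<open>Approximation of level sets in measure\<close>

definition level_band :: "'a measure \<Rightarrow> ('a \<Rightarrow> real) \<Rightarrow> real \<Rightarrow> real \<Rightarrow> 'a set" where
  "level_band M u t \<delta> = {x \<in> space M. u x \<noteq> 0 \<and> u x \<noteq> t \<and> \<bar>u x - t\<bar> \<le> \<delta>}"

lemma emeasure_tendsto_0_if_subset_level_band:
  assumes [measurable]: "u \<in> borel_measurable M"
    and support: "emeasure M {x \<in> space M. u x \<noteq> 0} < \<infinity>"
    and D: "\<And>k. D k \<in> sets M" "\<And>k. D k \<subseteq> level_band M u t (1 / Suc k)"
  shows "(\<lambda>k. emeasure M (D k)) \<longlonglongrightarrow> 0"
proof -
  define B where "B k = level_band M u t (1 / Suc k)" for k :: nat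
  have B_sets[measurable]: "B k \<in> sets M" for k
    unfolding B_def level_band_def by measurable
  have dec: "decseq B"
  proof (rule decseq_SucI)
    fix k
    have "1 / real (Suc (Suc k)) \<le> 1 / real (Suc k)"
      by (simp add: frac_le)
    then show "B (Suc k) \<subseteq> B k"
      by (auto simp: B_def level_band_def)
  qed
  have fin: "emeasure M (B k) \<noteq> \<infinity>" for k
  proof -
    have "emeasure M (B k) \<le> emeasure M {x \<in> space M. u x \<noteq> 0}"
      by (intro emeasure_mono) (auto simp: B_def level_band_def)
    then show ?thesis
      using support by auto
  qed
  have "(\<lambda>k. emeasure M (B k)) \<longlonglongrightarrow> emeasure M (\<Inter>k. B k)"
    by (rule Lim_emeasure_decseq[OF _ dec fin]) auto
  moreover have "(\<Inter>k. B k) = {}"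
  proof safe
    fix x assume x: "x \<in> (\<Inter>k. B k)"
    then have "0 < \<bar>u x - t\<bar>"
      by (auto simp: B_def level_band_def)
    then obtain k where "inverse (Suc k) < \<bar>u x - t\<bar>"
      using reals_Archimedean by blast
    moreover have "\<bar>u x - t\<bar> \<le> 1 / Suc k"
      using x by (auto simp: B_def level_band_def)
    ultimately show "x \<in> {}"
      by (simp add: inverse_eq_divide)
  qed
  ultimately have "(\<lambda>k. emeasure M (B k)) \<longlonglongrightarrow> 0"
    by simp
  moreover have "emeasure M (D k) \<le> emeasure M (B k)" for k
    using D(2) B_sets by (intro emeasure_mono) (simp_all add: B_def)
  ultimately show ?thesis
    using tendsto_sandwich[of "\<lambda>_. 0" "\<lambda>k. emeasure M (D k)" sequentially "\<lambda>k. emeasure M (B k)"]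
    by simp
qed

lemma layer_set_approximates_Fset:
  assumes [measurable]: "u \<in> borel_measurable M"
    and support: "emeasure M {x \<in> space M. u x \<noteq> 0} < \<infinity>"
    and Q: "AE s in lborel. Q s"
  obtains s where "\<And>k. Q (s k)"
    "(\<lambda>k. emeasure M ((layer_set M u (s k) - Fset M u t) \<union> (Fset M u t - layer_set M u (s k))))
      \<longlonglongrightarrow> 0"
proof -
  have approx: "\<exists>s. Q s \<and> layer_set M u s \<subseteq> Fset M u t \<and>
      Fset M u t - layer_set M u s \<subseteq> level_band M u t \<delta>" if "0 < \<delta>" for \<delta>
  proof (cases "0 \<le> t")
    case True
    obtain s where s: "t < s" "s < t + \<delta>" "Q s"
      using AE_lborel_exists_between[OF Q, of t "t + \<delta>"] \<open>0 < \<delta>\<close> by auto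
    then have "layer_set M u s = {x \<in> space M. s < u x}" "Fset M u t = {x \<in> space M. t < u x}"
      using True by (auto simp: layer_set_def Fset_def)
    with True s show ?thesis
      by (intro exI[of _ s]) (auto simp: level_band_def)
  next
    case False
    obtain s where s: "t - \<delta> < s" "s < t" "Q s"
      using AE_lborel_exists_between[OF Q, of "t - \<delta>" t] \<open>0 < \<delta>\<close> by auto
    then have "layer_set M u s = {x \<in> space M. u x \<le> s}" "Fset M u t = {x \<in> space M. u x < t}"
      using False by (auto simp: layer_set_def Fset_def)
    with False s show ?thesis
      by (intro exI[of _ s]) (auto simp: level_band_def)
  qed
  have "\<forall>k::nat. \<exists>s. Q s \<and> layer_set M u s \<subseteq> Fset M u t \<and>
      Fset M u t - layer_set M u s \<subseteq> level_band M u t (1 / Suc k)"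
    by (intro allI approx) simp
  then obtain s where s: "\<And>k. Q (s k)" "\<And>k. layer_set M u (s k) \<subseteq> Fset M u t"
    "\<And>k. Fset M u t - layer_set M u (s k) \<subseteq> level_band M u t (1 / Suc k)"
    by metis
  have "(\<lambda>k. emeasure M ((layer_set M u (s k) - Fset M u t) \<union> (Fset M u t - layer_set M u (s k))))
      \<longlonglongrightarrow> 0"
    using s(2,3) by (intro emeasure_tendsto_0_if_subset_level_band[OF assms(1,2), where t = t]) auto
  with s(1) show thesis
    by (rule that)
qed

lemma Fset_approximates_layer_set:
  assumes [measurable]: "u \<in> borel_measurable M"
    and support: "emeasure M {x \<in> space M. u x \<noteq> 0} < \<infinity>"
  obtains s where
    "(\<lambda>k. emeasure M ((Fset M u (s k) - layer_set M u t) \<union> (layer_set M u t - Fset M u (s k))))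
      \<longlonglongrightarrow> 0"
proof (cases "0 \<le> t")
  case True
  then have "Fset M u t = layer_set M u t"
    by (auto simp: Fset_def layer_set_def)
  then show thesis
    by (intro that[of "\<lambda>_. t"]) simp
next
  case False
  \<comment> \<open>\<open>s k \<down> t\<close> while staying negative, so that \<open>F\<^sup>s\<^sup>(\<^sup>k\<^sup>) = {u < s k}\<close>\<close>
  define s where "s k = min (t + 1 / Suc k) (t / 2)" for k :: nat
  have "(Fset M u (s k) - layer_set M u t) \<union> (layer_set M u t - Fset M u (s k)) \<subseteq>
      level_band M u t (1 / Suc k)" for k
  proof -
    have "s k < 0" "t < s k" "s k \<le> t + 1 / Suc k"
      using False by (auto simp: s_def)
    moreover from this have "Fset M u (s k) = {x \<in> space M. u x < s k}"
      "layer_set M u t = {x \<in> space M. u x \<le> t}"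
      using False by (auto simp: layer_set_def Fset_def)
    ultimately show ?thesis
      by (auto simp: level_band_def)
  qed
  then show thesis
    by (intro that[of s] emeasure_tendsto_0_if_subset_level_band[OF assms, where t = t]) auto
qed

section \<open>The Cheeger constant and the first eigenvalue\<close>

locale cheeger_problem =
  fixes M :: "'a measure" and P :: "'a set \<Rightarrow> ennreal" and \<Omega> :: "'a set"
  assumes sigma_finite: "sigma_finite_measure M"
    and P_empty: "P {} = 0"
    and P_lsc: "\<And>Es E. (\<forall>k. Es k \<in> sets M) \<Longrightarrow> E \<in> sets M \<Longrightarrow>
      (\<lambda>k. \<integral>\<^sup>+ x. ennreal \<bar>indicator (Es k) x - indicator E x\<bar> \<partial>M) \<longlonglongrightarrow> 0 \<Longrightarrow>
      P E \<le> liminf (\<lambda>k. P (Es k))"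
    and P_complement: "\<And>E. E \<in> sets M \<Longrightarrow> P E = P (space M - E)"
    and sets_\<Omega>: "\<Omega> \<in> sets M"
    and admissible: "admissible1 M P \<Omega>"
    and emeasure_\<Omega>_finite: "emeasure M \<Omega> < \<infinity>"
begin

abbreviation "h \<equiv> h1 M P \<Omega>"

lemma P_null_set:
  assumes "A \<in> null_sets M"
  shows "P A = 0"
proof -
  have "P A \<le> liminf (\<lambda>k. P {})"
  proof (rule P_lsc)
    show "(\<lambda>k. \<integral>\<^sup>+ x. ennreal \<bar>indicator {} x - indicator A x\<bar> \<partial>M) \<longlonglongrightarrow> 0"
      using assms by (subst nn_integral_abs_indicator_diff) (auto simp: null_sets_def)
  qed (use assms in auto)
  then show ?thesis
    using P_empty by (simp add: Liminf_const)
qed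

lemma P_space: "P (space M) = 0"
  using P_complement[of "{}"] P_empty by simp

lemma emeasure_finite_if_msub:
  assumes "E \<in> sets M" "msub M E \<Omega>"
  shows "emeasure M E < \<infinity>"
proof -
  have "emeasure M E \<le> emeasure M (\<Omega> \<union> (E - \<Omega>))"
    using assms sets_\<Omega> by (intro emeasure_mono) auto
  also have "\<dots> \<le> emeasure M \<Omega> + emeasure M (E - \<Omega>)"
    using assms sets_\<Omega> by (intro emeasure_subadditive) auto
  also have "\<dots> = emeasure M \<Omega>"
    using assms by (simp add: msub_def)
  finally show ?thesis
    using emeasure_\<Omega>_finite by simp
qed

lemma h_le: "cheeger_competitor M P \<Omega> E \<Longrightarrow> h \<le> P E / emeasure M E"
  unfolding h1_def by (rule Inf_lower) blast

lemma h_less_top: "h < \<infinity>"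
proof -
  obtain E where E: "cheeger_competitor M P \<Omega> E"
    using admissible by (auto simp: admissible1_def)
  then have "P E / emeasure M E < \<infinity>"
    by (auto simp: cheeger_competitor_def ennreal_divide_eq_top_iff less_top[symmetric])
  with h_le[OF E] show ?thesis
    by simp
qed

lemma h_mult_emeasure_le_P:
  assumes "E \<in> sets M" "msub M E \<Omega>"
  shows "h * emeasure M E \<le> P E"
proof (cases "emeasure M E = 0 \<or> P E = \<infinity>")
  case False
  then have E: "cheeger_competitor M P \<Omega> E"
    using assms emeasure_finite_if_msub[OF assms]
    by (auto simp: cheeger_competitor_def top.not_eq_extremum zero_less_iff_neq_zero)
  then show ?thesis
    using h_le[OF E] ennreal_le_divide_iff[of "emeasure M E"] by (auto simp: cheeger_competitor_def)
qed auto

lemma cheeger1I: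
  assumes "E \<in> sets M" "msub M E \<Omega>" "0 < emeasure M E" "P E \<le> h * emeasure M E"
  shows "cheeger1 M P \<Omega> E"
proof -
  have fin: "emeasure M E < \<infinity>"
    using emeasure_finite_if_msub assms by auto
  then have "P E < \<infinity>"
    using assms(4) h_less_top ennreal_mult_less_top[of h "emeasure M E"] by (simp add: order.strict_trans1)
  moreover have "P E = h * emeasure M E"
    using h_mult_emeasure_le_P[OF assms(1,2)] assms(4) by simp
  ultimately show ?thesis
    using assms fin ennreal_divide_eq_iff[of "emeasure M E"]
    by (simp add: cheeger1_def cheeger_competitor_def)
qed

lemma cheeger1D:
  assumes "cheeger1 M P \<Omega> E"
  shows "P E = h * emeasure M E" "E \<in> sets M" "msub M E \<Omega>" "0 < emeasure M E"
  using assms ennreal_divide_eq_iff[of "emeasure M E" "P E" h]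
  by (auto simp: cheeger1_def cheeger_competitor_def)

lemma P_le_h_mult_emeasure_if_tendsto:
  assumes [measurable]: "A \<in> sets M" "\<And>k. As k \<in> sets M"
    and conv: "(\<lambda>k. emeasure M ((As k - A) \<union> (A - As k))) \<longlonglongrightarrow> 0"
    and le: "\<And>k. P (As k) \<le> h * emeasure M (As k)"
  shows "P A \<le> h * emeasure M A"
proof -
  define d where "d k = emeasure M ((As k - A) \<union> (A - As k))" for k
  have "P (As k) \<le> h * (emeasure M A + d k)" for k
  proof -
    have "emeasure M (As k) \<le> emeasure M (A \<union> ((As k - A) \<union> (A - As k)))"
      by (intro emeasure_mono) auto
    also have "\<dots> \<le> emeasure M A + d k"
      unfolding d_def by (intro emeasure_subadditive) auto
    finally show ?thesis
      using le[of k] by (meson mult_left_mono order_trans zero_le)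
  qed
  moreover have "(\<lambda>k. h * (emeasure M A + d k)) \<longlonglongrightarrow> h * (emeasure M A + 0)"
    using h_less_top conv unfolding d_def
    by (intro ennreal_tendsto_cmult tendsto_add tendsto_const) auto
  ultimately have "liminf (\<lambda>k. P (As k)) \<le> h * emeasure M A"
    using Liminf_mono[of "\<lambda>k. P (As k)" "\<lambda>k. h * (emeasure M A + d k)" sequentially]
      lim_imp_Liminf[of sequentially] by fastforce
  moreover have "P A \<le> liminf (\<lambda>k. P (As k))"
    using P_lsc[of As A] conv by (simp add: nn_integral_abs_indicator_diff)
  ultimately show ?thesis
    by simp
qed

lemma BV0_borel_measurable: "BV0 M P \<Omega> u \<Longrightarrow> u \<in> borel_measurable M"
  by (auto simp: BV0_def BV_def)

lemma BV0_support_msub: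
  assumes "BV0 M P \<Omega> u" "A \<in> sets M" "A \<subseteq> {x \<in> space M. u x \<noteq> 0}"
  shows "msub M A \<Omega>"
proof -
  have [measurable]: "u \<in> borel_measurable M"
    using BV0_borel_measurable[OF assms(1)] .
  have "AE x in M. ennreal \<bar>u x\<bar> * indicator (space M - \<Omega>) x = 0"
    using assms(1) sets_\<Omega> by (subst nn_integral_0_iff_AE[symmetric]) (auto simp: BV0_def)
  then have "AE x in M. x \<notin> A - \<Omega>"
    using assms(3) by (auto elim!: eventually_mono simp: indicator_def)
  then have "A - \<Omega> \<in> null_sets M"
    using assms(2) sets_\<Omega> by (subst AE_iff_null_sets) auto
  then show ?thesis
    by (auto simp: msub_def)
qed

lemma BV0_support_finite:
  assumes "BV0 M P \<Omega> u"
  shows "emeasure M {x \<in> space M. u x \<noteq> 0} < \<infinity>"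
proof -
  have [measurable]: "u \<in> borel_measurable M"
    using BV0_borel_measurable[OF assms] .
  show ?thesis
    by (intro emeasure_finite_if_msub BV0_support_msub[OF assms]) auto
qed

lemma BV0_norm1:
  "BV0 M P \<Omega> u \<Longrightarrow> ennreal (norm1 M u) = (\<integral>\<^sup>+ x. ennreal \<bar>u x\<bar> \<partial>M)"
  unfolding norm1_def BV0_def BV_def by (subst nn_integral_eq_integral) auto

lemma P_superlevel_set_eq_P_layer_set:
  assumes [measurable]: "u \<in> borel_measurable M"
  shows "P {x \<in> space M. t < u x} = P (layer_set M u t)"
proof (cases "0 \<le> t")
  case True
  then have "layer_set M u t = {x \<in> space M. t < u x}"
    by (auto simp: layer_set_def)
  then show ?thesis
    by simp
next
  case False
  have "P {x \<in> space M. t < u x} = P (space M - {x \<in> space M. t < u x})"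
    by (rule P_complement) measurable
  also have "space M - {x \<in> space M. t < u x} = layer_set M u t"
    using False by (auto simp: layer_set_def)
  finally show ?thesis .
qed

lemma Var_BV0:
  assumes "BV0 M P \<Omega> u"
  shows "Var M P u = (\<integral>\<^sup>+ t. P (layer_set M u t) \<partial>lebesgue)"
    and "(\<lambda>t. P (layer_set M u t)) \<in> borel_measurable lebesgue"
proof -
  have "Var M P u < \<infinity>"
    using assms by (simp add: BV0_def BV_def)
  then have "(\<lambda>t. P {x \<in> space M. t < u x}) \<in> borel_measurable lebesgue"
    by (auto simp: Var_def split: if_splits)
  moreover have "P {x \<in> space M. t < u x} = P (layer_set M u t)" for t
    using P_superlevel_set_eq_P_layer_set[OF BV0_borel_measurable[OF assms]] .
  ultimately show "Var M P u = (\<integral>\<^sup>+ t. P (layer_set M u t) \<partial>lebesgue)"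
    and "(\<lambda>t. P (layer_set M u t)) \<in> borel_measurable lebesgue"
    by (simp_all add: Var_def)
qed

lemma nn_integral_h_mult_emeasure_layer_set:
  assumes "BV0 M P \<Omega> u"
  shows "(\<integral>\<^sup>+ t. h * emeasure M (layer_set M u t) \<partial>lebesgue) = h * ennreal (norm1 M u)"
    and "(\<lambda>t. h * emeasure M (layer_set M u t)) \<in> borel_measurable lebesgue"
proof -
  note u = BV0_borel_measurable[OF assms]
  note meas = borel_measurable_emeasure_layer_set[OF sigma_finite u]
  show "(\<integral>\<^sup>+ t. h * emeasure M (layer_set M u t) \<partial>lebesgue) = h * ennreal (norm1 M u)"
    unfolding nn_integral_completion
    by (subst nn_integral_cmult[OF meas])
      (simp add: nn_integral_emeasure_layer_set[OF sigma_finite u] BV0_norm1[OF assms])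
  show "(\<lambda>t. h * emeasure M (layer_set M u t)) \<in> borel_measurable lebesgue"
    using meas by (intro measurable_completion borel_measurable_times_ennreal borel_measurable_const)
qed

lemma h_mult_emeasure_layer_set_le_P:
  assumes "BV0 M P \<Omega> u"
  shows "h * emeasure M (layer_set M u t) \<le> P (layer_set M u t)"
proof -
  have [measurable]: "u \<in> borel_measurable M"
    using BV0_borel_measurable[OF assms] .
  show ?thesis
    by (intro h_mult_emeasure_le_P BV0_support_msub[OF assms] layer_set_subset_support) measurable
qed

lemma h_mult_norm1_le_Var:
  assumes "BV0 M P \<Omega> u"
  shows "h * ennreal (norm1 M u) \<le> Var M P u"
  unfolding Var_BV0(1)[OF assms] nn_integral_h_mult_emeasure_layer_set(1)[OF assms, symmetric]
  by (intro nn_integral_mono h_mult_emeasure_layer_set_le_P[OF assms])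

lemma Var_indicator:
  assumes "E \<in> sets M"
  shows "Var M P (indicator E) = P E"
proof -
  have "P {x \<in> space M. t < (indicator E x :: real)} = P E * indicator {0..<1} t" for t :: real
  proof -
    consider "t < 0" | "0 \<le> t" "t < 1" | "1 \<le> t"
      by linarith
    then show ?thesis
    proof cases
      case 1
      then have "{x \<in> space M. t < (indicator E x :: real)} = space M"
        by (auto simp: indicator_def)
      then show ?thesis
        using 1 P_space by simp
    next
      case 2
      then have "{x \<in> space M. t < (indicator E x :: real)} = E"
        using sets.sets_into_space[OF assms] by (auto simp: indicator_def)
      then show ?thesis
        using 2 by simp
    next
      case 3
      then have "{x \<in> space M. t < (indicator E x :: real)} = {}"
        by (auto simp: indicator_def)
      then show ?thesis
        using 3 P_empty by (simp del: Collect_empty_eq)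
    qed
  qed
  moreover have "(\<lambda>t. P E * indicator {0..<1::real} t) \<in> borel_measurable lebesgue"
    by (intro measurable_completion) measurable
  ultimately show ?thesis
    by (simp add: Var_def nn_integral_completion nn_integral_cmult_indicator)
qed

lemma cheeger_competitor_indicator:
  assumes "cheeger_competitor M P \<Omega> E"
  shows "BV0 M P \<Omega> (indicator E)" and "ennreal (norm1 M (indicator E)) = emeasure M E"
    and "0 < norm1 M (indicator E)"
proof -
  have E[measurable]: "E \<in> sets M" and fin: "emeasure M E < \<infinity>" and pos: "0 < emeasure M E"
    and "P E < \<infinity>" and "msub M E \<Omega>"
    using assms by (auto simp: cheeger_competitor_def)
  have "integrable M (indicator E :: 'a \<Rightarrow> real)"
    using fin by (simp add: integrable_indicator_iff)
  moreover have "(\<integral>\<^sup>+ x. ennreal \<bar>indicator E x :: real\<bar> * indicator (space M - \<Omega>) x \<partial>M) =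
      (\<integral>\<^sup>+ x. indicator (E - \<Omega>) x \<partial>M)"
    by (intro nn_integral_cong) (auto simp: indicator_def)
  ultimately show "BV0 M P \<Omega> (indicator E)"
    using \<open>P E < \<infinity>\<close> \<open>msub M E \<Omega>\<close> sets_\<Omega>
    by (simp add: BV0_def BV_def Var_indicator msub_def)
  show norm: "ennreal (norm1 M (indicator E)) = emeasure M E"
    using fin by (simp add: norm1_def emeasure_eq_ennreal_measure less_top)
  show "0 < norm1 M (indicator E)"
    using pos by (simp add: norm[symmetric])
qed

lemma lambda11_eq_h1: "lambda11 M P \<Omega> = h"
proof (rule antisym)
  show "lambda11 M P \<Omega> \<le> h"
    unfolding h1_def
  proof (rule Inf_greatest, clarify)
    fix E assume E: "cheeger_competitor M P \<Omega> E"
    then have "lambda11 M P \<Omega> \<le> Var M P (indicator E) / ennreal (norm1 M (indicator E))"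
      unfolding lambda11_def using cheeger_competitor_indicator[OF E] by (intro Inf_lower) blast
    then show "lambda11 M P \<Omega> \<le> P E / emeasure M E"
      using E cheeger_competitor_indicator[OF E] by (simp add: Var_indicator cheeger_competitor_def)
  qed
  show "h \<le> lambda11 M P \<Omega>"
    unfolding lambda11_def
  proof (rule Inf_greatest, clarify)
    fix u assume "BV0 M P \<Omega> u" "0 < norm1 M u"
    then show "h \<le> Var M P u / ennreal (norm1 M u)"
      using h_mult_norm1_le_Var ennreal_le_divide_iff[of "ennreal (norm1 M u)"] by simp
  qed
qed

section \<open>Minimizers and Cheeger sets\<close>

lemma AE_P_layer_set_eq_if_Var_eq:
  assumes u: "BV0 M P \<Omega> u" and eq: "Var M P u = h * ennreal (norm1 M u)"
  shows "AE t in lborel. P (layer_set M u t) = h * emeasure M (layer_set M u t)"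
proof -
  have "AE t in lebesgue. P (layer_set M u t) = h * emeasure M (layer_set M u t)"
  proof (rule AE_eq_if_le_and_nn_integral_eq)
    show "integral\<^sup>N lebesgue (\<lambda>t. P (layer_set M u t)) =
        integral\<^sup>N lebesgue (\<lambda>t. h * emeasure M (layer_set M u t))"
      using eq by (simp add: Var_BV0(1)[OF u] nn_integral_h_mult_emeasure_layer_set(1)[OF u])
    show "integral\<^sup>N lebesgue (\<lambda>t. h * emeasure M (layer_set M u t)) \<noteq> \<infinity>"
      using h_less_top by (simp add: nn_integral_h_mult_emeasure_layer_set(1)[OF u] ennreal_mult_eq_top_iff)
  qed (use Var_BV0(2)[OF u] nn_integral_h_mult_emeasure_layer_set(2)[OF u]
      h_mult_emeasure_layer_set_le_P[OF u] in auto)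
  then show ?thesis
    by (simp add: AE_completion_iff)
qed

lemma cheeger1_Fset_if_Var_eq:
  assumes u: "BV0 M P \<Omega> u" and eq: "Var M P u = h * ennreal (norm1 M u)"
    and pos: "0 < emeasure M (Fset M u t)"
  shows "cheeger1 M P \<Omega> (Fset M u t)"
proof -
  have u_meas[measurable]: "u \<in> borel_measurable M"
    using BV0_borel_measurable[OF u] .
  obtain s where s: "\<And>k. P (layer_set M u (s k)) = h * emeasure M (layer_set M u (s k))"
    and conv: "(\<lambda>k. emeasure M ((layer_set M u (s k) - Fset M u t) \<union> (Fset M u t - layer_set M u (s k))))
      \<longlonglongrightarrow> 0"
    using layer_set_approximates_Fset[OF u_meas BV0_support_finite[OF u] AE_P_layer_set_eq_if_Var_eq[OF u eq]]
    by blast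
  have "P (Fset M u t) \<le> h * emeasure M (Fset M u t)"
    by (rule P_le_h_mult_emeasure_if_tendsto[OF _ _ conv]) (simp_all add: s)
  then show ?thesis
    by (intro cheeger1I BV0_support_msub[OF u] Fset_subset_support pos) simp_all
qed

lemma P_layer_set_le_if_Fset_cheeger1:
  assumes u: "BV0 M P \<Omega> u"
    and cheeger: "\<And>t. 0 < emeasure M (Fset M u t) \<Longrightarrow> cheeger1 M P \<Omega> (Fset M u t)"
  shows "P (layer_set M u t) \<le> h * emeasure M (layer_set M u t)"
proof -
  have u_meas[measurable]: "u \<in> borel_measurable M"
    using BV0_borel_measurable[OF u] .
  have Fset_le: "P (Fset M u s) \<le> h * emeasure M (Fset M u s)" for s
  proof (cases "emeasure M (Fset M u s) = 0")
    case True
    then have "Fset M u s \<in> null_sets M"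
      by (intro null_setsI) measurable
    then show ?thesis
      by (simp add: P_null_set)
  next
    case False
    then have "cheeger1 M P \<Omega> (Fset M u s)"
      by (intro cheeger) (simp add: zero_less_iff_neq_zero)
    then show ?thesis
      by (simp add: cheeger1D(1))
  qed
  obtain s where conv:
    "(\<lambda>k. emeasure M ((Fset M u (s k) - layer_set M u t) \<union> (layer_set M u t - Fset M u (s k))))
      \<longlonglongrightarrow> 0"
    using Fset_approximates_layer_set[OF u_meas BV0_support_finite[OF u]] by blast
  show ?thesis
    by (rule P_le_h_mult_emeasure_if_tendsto[OF _ _ conv Fset_le]) measurable
qed

lemma Var_eq_h_mult_norm1_iff:
  assumes u: "BV0 M P \<Omega> u"
  shows "Var M P u = h * ennreal (norm1 M u) \<longleftrightarrow>
    (\<forall>t. 0 < emeasure M (Fset M u t) \<longrightarrow> cheeger1 M P \<Omega> (Fset M u t))"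
proof
  assume "\<forall>t. 0 < emeasure M (Fset M u t) \<longrightarrow> cheeger1 M P \<Omega> (Fset M u t)"
  then have "Var M P u \<le> h * ennreal (norm1 M u)"
    unfolding Var_BV0(1)[OF u] nn_integral_h_mult_emeasure_layer_set(1)[OF u, symmetric]
    by (intro nn_integral_mono P_layer_set_le_if_Fset_cheeger1[OF u]) blast
  then show "Var M P u = h * ennreal (norm1 M u)"
    using h_mult_norm1_le_Var[OF u] by (rule antisym)
qed (use cheeger1_Fset_if_Var_eq[OF u] in blast)

lemma Var_divide_norm1_eq_lambda11_iff:
  assumes "BV0 M P \<Omega> u" "0 < norm1 M u"
  shows "Var M P u / ennreal (norm1 M u) = lambda11 M P \<Omega> \<longleftrightarrow>
    (\<forall>t. 0 < emeasure M (Fset M u t) \<longrightarrow> cheeger1 M P \<Omega> (Fset M u t))"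
  using assms by (simp add: lambda11_eq_h1 ennreal_divide_eq_iff Var_eq_h_mult_norm1_iff)

lemma lambda11_minimizer_indicator:
  assumes "cheeger1 M P \<Omega> E"
  shows "lambda11_minimizer M P \<Omega> (indicator E)"
  using assms cheeger_competitor_indicator[of E] Var_indicator[of E]
  by (simp add: lambda11_minimizer_def cheeger1_def cheeger_competitor_def lambda11_eq_h1)

lemma lambda11_minimizerD:
  assumes "lambda11_minimizer M P \<Omega> u"
  shows "BV0 M P \<Omega> u" "0 < norm1 M u"
    "\<And>t. 0 < emeasure M (Fset M u t) \<Longrightarrow> cheeger1 M P \<Omega> (Fset M u t)"
  using assms Var_divide_norm1_eq_lambda11_iff[of u] by (auto simp: lambda11_minimizer_def)

lemma unique_cheeger1_if_unique_lambda11_minimizer: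
  assumes u: "lambda11_minimizer M P \<Omega> u"
    and unique: "\<And>v. lambda11_minimizer M P \<Omega> v \<Longrightarrow> \<exists>c::real. c \<noteq> 0 \<and> (AE x in M. v x = c * u x)"
  shows "\<exists>E. cheeger1 M P \<Omega> E \<and>
    (\<forall>F. cheeger1 M P \<Omega> F \<longrightarrow> emeasure M (E - F) = 0 \<and> emeasure M (F - E) = 0)"
proof -
  have [measurable]: "u \<in> borel_measurable M"
    using BV0_borel_measurable[OF lambda11_minimizerD(1)[OF u]] .
  have "\<not> (AE x in M. u x = 0)"
    using norm1_eq_0_if_AE_eq_0 lambda11_minimizerD(2)[OF u] by force
  then obtain t where t: "0 < emeasure M (Fset M u t)"
    using AE_eq_zero_if_Fset_null[of u M] by (auto simp: zero_less_iff_neq_zero)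
  have support: "AE x in M. x \<in> F \<longleftrightarrow> u x \<noteq> 0" if F: "cheeger1 M P \<Omega> F" for F
  proof -
    obtain c :: real where "c \<noteq> 0" and c: "AE x in M. indicator F x = c * u x"
      using unique[OF lambda11_minimizer_indicator[OF F]] by blast
    from c show ?thesis
    proof (rule eventually_mono)
      fix x assume "indicator F x = c * u x"
      then show "x \<in> F \<longleftrightarrow> u x \<noteq> 0"
        using \<open>c \<noteq> 0\<close> by (cases "x \<in> F") auto
    qed
  qed
  have "emeasure M (Fset M u t - F) = 0 \<and> emeasure M (F - Fset M u t) = 0"
    if "cheeger1 M P \<Omega> F" for F
    using support[OF that] support[OF lambda11_minimizerD(3)[OF u t]] cheeger1D(2)[OF that]
    by (subst null_differences_iff_AE_mem_iff) (auto elim: eventually_elim2)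
  then show ?thesis
    using lambda11_minimizerD(3)[OF u t] by blast
qed

lemma unique_lambda11_minimizer_if_unique_cheeger1:
  assumes E: "cheeger1 M P \<Omega> E"
    and unique: "\<And>F. cheeger1 M P \<Omega> F \<Longrightarrow> emeasure M (E - F) = 0 \<and> emeasure M (F - E) = 0"
    and v: "lambda11_minimizer M P \<Omega> v"
  shows "\<exists>c::real. c \<noteq> 0 \<and> (AE x in M. v x = c * indicator E x)"
proof -
  have [measurable]: "v \<in> borel_measurable M" "E \<in> sets M"
    using BV0_borel_measurable[OF lambda11_minimizerD(1)[OF v]] cheeger1D(2)[OF E] by auto
  have "emeasure M (Fset M v t) = 0 \<or> (AE x in M. x \<in> Fset M v t \<longleftrightarrow> x \<in> E)" for t
    using lambda11_minimizerD(3)[OF v, of t] unique null_differences_iff_AE_mem_iff[of "Fset M v t" M E]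
    by (auto simp: zero_less_iff_neq_zero)
  then obtain c where c: "AE x in M. v x = c * indicator E x"
    using AE_eq_mult_indicator_if_Fset_null_or_AE_eq[of v M E] cheeger1D(4)[OF E] by auto
  moreover have "c \<noteq> 0"
  proof
    assume "c = 0"
    with c have "norm1 M v = 0"
      by (intro norm1_eq_0_if_AE_eq_0) simp
    with lambda11_minimizerD(2)[OF v] show False
      by simp
  qed
  ultimately show ?thesis
    by blast
qed

end

theorem corollary5p5:
  fixes M :: "'a measure" and P :: "'a set \<Rightarrow> ennreal" and \<Omega> :: "'a set"
  assumes sf: "sigma_finite_measure M"
    and proper: "\<exists>E\<in>sets M. P E < \<infinity>"
    and P1: "P {} = 0"
    and P4: "\<And>Es E. (\<forall>k. Es k \<in> sets M) \<Longrightarrow> E \<in> sets M \<Longrightarrow>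
               (\<lambda>k. \<integral>\<^sup>+ x. ennreal \<bar>indicator (Es k) x - indicator E x\<bar> \<partial>M) \<longlonglongrightarrow> 0 \<Longrightarrow>
               P E \<le> liminf (\<lambda>k. P (Es k))"
    and P7: "\<And>E. E \<in> sets M \<Longrightarrow> P E = P (space M - E)"
    and \<Omega>: "\<Omega> \<in> sets M"
    and adm: "admissible1 M P \<Omega>"
    and pos: "0 < emeasure M \<Omega>" and fin: "emeasure M \<Omega> < \<infinity>"
  shows "(\<forall>u. BV0 M P \<Omega> u \<and> norm1 M u > 0 \<longrightarrow>
            (Var M P u / ennreal (norm1 M u) = lambda11 M P \<Omega> \<longleftrightarrow>
             (\<forall>t. 0 < emeasure M (Fset M u t) \<longrightarrow> cheeger1 M P \<Omega> (Fset M u t))))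
       \<and> ((\<exists>u. lambda11_minimizer M P \<Omega> u \<and>
              (\<forall>v. lambda11_minimizer M P \<Omega> v \<longrightarrow>
                   (\<exists>c::real. c \<noteq> 0 \<and> (AE x in M. v x = c * u x))))
          \<longleftrightarrow>
          (\<exists>E. cheeger1 M P \<Omega> E \<and>
              (\<forall>F. cheeger1 M P \<Omega> F \<longrightarrow> emeasure M (E - F) = 0 \<and> emeasure M (F - E) = 0)))"
proof -
  interpret cheeger_problem M P \<Omega>
    by (rule cheeger_problem.intro[OF sf P1 P4 P7 \<Omega> adm fin])
  show ?thesis
    using Var_divide_norm1_eq_lambda11_iff unique_cheeger1_if_unique_lambda11_minimizer
      lambda11_minimizer_indicator unique_lambda11_minimizer_if_unique_cheeger1
    by blast
qed

end
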